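(* If $X$ is a metric space with weak hyperbolic property C, then $X$ has straight finite decomposition complexity (i.e. the metric family $\{X\}$ has sFDC).
   Context: For $R>0$, a family $\mathcal U$ of nonempty subsets of a metric space is $R$-disjoint if $d(A,B)>R$ for all distinct $A,B\in\mathcal U$, where $d(A,B)=\inf\{d(a,b):a\in A,b\in B\}$. $B_r(x)$ denotes the open ball of radius $r$ about $x$. A subset $U\subset X$ is $(N,R)$-large scale doubling if for every $x\in X$ and every $r\ge R$, $B_{2r}(x)\cap U$ can be covered by $N$ balls of radius $r$ with centers in $X$. A family $\mathcal U$ of subsets of $X$ is weakly uniformly large scale doubling if there is $(N,R)$ such that each $U\in\mathcal U$ is $(N,R)$-large scale doubling. $X$ has weak hyperbolic property C if for every sequence $R_0,R_1,\dots$ of positive reals there exist $n\ge0$ and $R_i$-disjoint families $\mathcal U_i$ ($i=0,\dots,n$) such that $\bigcup_{i=0}^n\mathcal U_i$ is a weakly uniformly large scale doubling cover of $X$. A metric family is a collection of metric spaces (subsets carry the restricted metric); it is uniformly bounded if the supremum of diameters of its members is finite. For metric families $\mathcal X,\mathcal Y$ and $R>0$, $\mathcal X\xrightarrow{R}\mathcal Y$ means every $X\in\mathcal X$ satisfies $X=\bigcup(\mathcal U_1\cup\mathcal U_2)$ for some $R$-disjoint families $\mathcal U_1,\mathcal U_2$ with $\mathcal U_1\cup\mathcal U_2\subset\mathcal Y$. A metric family $\mathcal X$ has sFDC if for every sequence $R_0\le R_1\le\cdots$ of positive reals there exist $n\in\mathbb N$ and metric families $\mathcal U_0,\dots,\mathcal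 U_n$ with $\mathcal U_n$ uniformly bounded and $\mathcal X\xrightarrow{R_0}\mathcal U_0\xrightarrow{R_1}\cdots\xrightarrow{R_n}\mathcal U_n$. *)

theory Defs
  imports "HOL-Analysis.Analysis"
begin

text \<open>A metric space is modelled as a subset X of a type of class metric_space,
  with the restricted metric; metric families of subspaces of X are sets of subsets.\<close>

definition R_disjoint :: "real \<Rightarrow> 'a::metric_space set set \<Rightarrow> bool" where
  "R_disjoint R \<U> \<longleftrightarrow> (\<forall>A\<in>\<U>. A \<noteq> {}) \<and>
     (\<forall>A\<in>\<U>. \<forall>B\<in>\<U>. A \<noteq> B \<longrightarrow> setdist A B > R)"

definition ls_doubling :: "'a::metric_space set \<Rightarrow> nat \<Rightarrow> real \<Rightarrow> 'a set \<Rightarrow> bool" where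
  "ls_doubling X N R U \<longleftrightarrow> (\<forall>x\<in>X. \<forall>r\<ge>R.
     \<exists>C. C \<subseteq> X \<and> finite C \<and> card C \<le> N \<and>
       ball x (2*r) \<inter> X \<inter> U \<subseteq> (\<Union>c\<in>C. ball c r))"

definition weakly_uniformly_ls_doubling :: "'a::metric_space set \<Rightarrow> 'a set set \<Rightarrow> bool" where
  "weakly_uniformly_ls_doubling X \<U> \<longleftrightarrow> (\<exists>N R. R > 0 \<and> (\<forall>U\<in>\<U>. ls_doubling X N R U))"

definition weak_hyperbolic_C :: "'a::metric_space set \<Rightarrow> bool" where
  "weak_hyperbolic_C X \<longleftrightarrow> (\<forall>Rs::nat \<Rightarrow> real. (\<forall>i. Rs i > 0) \<longrightarrow>
     (\<exists>n::nat. \<exists>\<U>::nat \<Rightarrow> 'a set set.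
        (\<forall>i\<le>n. R_disjoint (Rs i) (\<U> i)) \<and>
        (\<forall>i\<le>n. \<forall>U\<in>\<U> i. U \<subseteq> X) \<and>
        \<Union>(\<Union>i\<le>n. \<U> i) = X \<and>
        weakly_uniformly_ls_doubling X (\<Union>i\<le>n. \<U> i)))"

definition uniformly_bounded :: "'a::metric_space set set \<Rightarrow> bool" where
  "uniformly_bounded \<U> \<longleftrightarrow> (\<exists>D. \<forall>U\<in>\<U>. \<forall>a\<in>U. \<forall>b\<in>U. dist a b \<le> D)"

definition decomposes :: "real \<Rightarrow> 'a::metric_space set set \<Rightarrow> 'a set set \<Rightarrow> bool" where
  "decomposes R \<X> \<Y> \<longleftrightarrow> (\<forall>X\<in>\<X>. \<exists>\<U>1 \<U>2.
      R_disjoint R \<U>1 \<and> R_disjoint R \<U>2 \<and> \<U>1 \<union> \<U>2 \<subseteq> \<Y> \<and> X = \<Union>(\<U>1 \<union> \<U>2))"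

definition sFDC :: "'a::metric_space set set \<Rightarrow> bool" where
  "sFDC \<X> \<longleftrightarrow> (\<forall>Rs::nat \<Rightarrow> real. (\<forall>i. Rs i > 0) \<longrightarrow> mono Rs \<longrightarrow>
     (\<exists>n::nat. \<exists>\<U>::nat \<Rightarrow> 'a set set.
        uniformly_bounded (\<U> n) \<and> decomposes (Rs 0) \<X> (\<U> 0) \<and>
        (\<forall>i<n. decomposes (Rs (Suc i)) (\<U> i) (\<U> (Suc i)))))"

end

theory Submission
  imports Defs
begin

text \<open>Apply property C to the given radii: it yields \<open>Rs i\<close>-disjoint families \<open>W 0, \<dots>, W n\<close>
  covering \<open>X\<close> whose members are uniformly \<open>(N, R0)\<close>-doubling. In step \<open>i \<le> n\<close> every piece is
  cut into its intersections with the members of \<open>W i\<close>, which are \<open>Rs i\<close>-disjoint, and the rest,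
  which misses \<open>W i\<close>. A member \<open>U\<close> of the cover is then decomposed by colours: a maximal set
  of points of \<open>U\<close>, coloured by \<open>K = N^3 + 1\<close> colours, that are \<open>S\<close>-separated, and
  \<open>D\<close>-separated within each colour, has \<open>S\<close>-balls covering \<open>U\<close>, because by doubling at most
  \<open>N^3\<close> colours occur within distance \<open>D\<close> of any point. The \<open>S\<close>-balls of one colour are
  \<open>(D - 2 S)\<close>-disjoint, so removing them colour by colour takes \<open>K\<close> further steps and leaves
  only pieces of diameter at most \<open>2 S\<close>.\<close>

section \<open>Ball coverings of doubling sets\<close>

definition coverable_by_balls :: "'a::metric_space set \<Rightarrow> nat \<Rightarrow> real \<Rightarrow> 'a set \<Rightarrow> bool" where
  "coverable_by_balls X m r A \<longleftrightarrow>
     (\<exists>C. C \<subseteq> X \<and> finite C \<and> card C \<le> m \<and> A \<subseteq> (\<Union>c\<in>C. ball c r))"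

lemma coverable_by_balls_subset:
  "coverable_by_balls X m r B \<Longrightarrow> A \<subseteq> B \<Longrightarrow> coverable_by_balls X m r A"
  unfolding coverable_by_balls_def by blast

lemma coverable_by_balls_refine:
  assumes A: "coverable_by_balls X m r A"
    and balls: "\<And>c. c \<in> X \<Longrightarrow> coverable_by_balls X m' r' (ball c r \<inter> A)"
  shows "coverable_by_balls X (m * m') r' A"
proof -
  obtain C where C: "C \<subseteq> X" "finite C" "card C \<le> m" "A \<subseteq> (\<Union>c\<in>C. ball c r)"
    using A unfolding coverable_by_balls_def by blast
  have "\<forall>c\<in>C. \<exists>D. D \<subseteq> X \<and> finite D \<and> card D \<le> m' \<and> ball c r \<inter> A \<subseteq> (\<Union>d\<in>D. ball d r')"
    using balls C(1) unfolding coverable_by_balls_def by blast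
  then obtain F where F: "\<And>c. c \<in> C \<Longrightarrow> F c \<subseteq> X \<and> finite (F c) \<and> card (F c) \<le> m' \<and>
      ball c r \<inter> A \<subseteq> (\<Union>d\<in>F c. ball d r')"
    by (rule bchoice[THEN exE]) blast
  have "card (\<Union>c\<in>C. F c) \<le> (\<Sum>c\<in>C. card (F c))"
    by (rule card_UN_le[OF C(2)])
  also have "\<dots> \<le> card C * m'"
    using sum_bounded_above[of C "\<lambda>c. card (F c)" m'] F by simp
  also have "\<dots> \<le> m * m'"
    using C(3) by simp
  finally have "card (\<Union>c\<in>C. F c) \<le> m * m'" .
  moreover have "A \<subseteq> (\<Union>d\<in>(\<Union>c\<in>C. F c). ball d r')"
  proof
    fix a assume "a \<in> A"
    then obtain c where "c \<in> C" "a \<in> ball c r \<inter> A"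
      using C(4) by blast
    then obtain d where "d \<in> F c" "a \<in> ball d r'"
      using F by blast
    then show "a \<in> (\<Union>d\<in>(\<Union>c\<in>C. F c). ball d r')"
      using \<open>c \<in> C\<close> by blast
  qed
  moreover have "(\<Union>c\<in>C. F c) \<subseteq> X" "finite (\<Union>c\<in>C. F c)"
    using F C(2) by auto
  ultimately show ?thesis
    unfolding coverable_by_balls_def by blast
qed

lemma ls_doubling_iff_coverable:
  "ls_doubling X N R U \<longleftrightarrow>
     (\<forall>x\<in>X. \<forall>r\<ge>R. coverable_by_balls X N r (ball x (2*r) \<inter> X \<inter> U))"
  unfolding ls_doubling_def coverable_by_balls_def ..

lemma ls_doubling_coverable_power:
  assumes ls: "ls_doubling X N R U" and "0 < R" "R \<le> r" "x \<in> X"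
  shows "coverable_by_balls X (N^k) r (ball x (2^k * r) \<inter> X \<inter> U)"
  using \<open>x \<in> X\<close>
proof (induction k arbitrary: x)
  case 0
  then show ?case
    unfolding coverable_by_balls_def by (intro exI[of _ "{x}"]) auto
next
  case (Suc k)
  have "1 * r \<le> 2^k * r"
    using \<open>0 < R\<close> \<open>R \<le> r\<close> by (intro mult_right_mono) simp_all
  then have "R \<le> 2^k * r"
    using \<open>R \<le> r\<close> by simp
  then have "coverable_by_balls X N (2^k * r) (ball x (2^Suc k * r) \<inter> X \<inter> U)"
    using ls Suc.prems unfolding ls_doubling_iff_coverable by (simp add: mult.assoc)
  moreover have "coverable_by_balls X (N^k) r (ball c (2^k * r) \<inter> (ball x (2^Suc k * r) \<inter> X \<inter> U))"
    if "c \<in> X" for c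
    using Suc.IH[OF that] by (rule coverable_by_balls_subset) blast
  ultimately have "coverable_by_balls X (N * N^k) r (ball x (2^Suc k * r) \<inter> X \<inter> U)"
    by (rule coverable_by_balls_refine)
  then show ?case
    by simp
qed

lemma ls_doubling_separated_card_le:
  assumes "ls_doubling X N R U" "0 < R" "R \<le> r" "x \<in> X"
    and P: "P \<subseteq> ball x (2^k * r) \<inter> X \<inter> U"
    and sep: "\<And>p q. p \<in> P \<Longrightarrow> q \<in> P \<Longrightarrow> p \<noteq> q \<Longrightarrow> 2 * r \<le> dist p q"
  shows "finite P \<and> card P \<le> N^k"
proof -
  obtain C where C: "finite C" "card C \<le> N^k" "P \<subseteq> (\<Union>c\<in>C. ball c r)"
    using ls_doubling_coverable_power[OF assms(1-4), of k] P
    unfolding coverable_by_balls_def by blast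
  have "\<forall>p\<in>P. \<exists>c. c \<in> C \<and> p \<in> ball c r"
    using C(3) by blast
  then obtain g where g: "\<And>p. p \<in> P \<Longrightarrow> g p \<in> C \<and> p \<in> ball (g p) r"
    by (rule bchoice[THEN exE]) blast
  have "inj_on g P"
  proof (rule inj_onI, rule ccontr)
    fix p q assume pq: "p \<in> P" "q \<in> P" "g p = g q" "p \<noteq> q"
    have "dist (g q) p < r" "dist (g q) q < r"
      using g[OF pq(1)] g[OF pq(2)] pq(3) by auto
    moreover have "2 * r \<le> dist p q"
      using sep pq by blast
    ultimately show False
      using dist_triangle3[of p q "g q"] by linarith
  qed
  moreover have "g ` P \<subseteq> C"
    using g by blast
  ultimately show ?thesis
    using C(1,2) card_inj_on_le[of g P C] finite_imageD[of g P] finite_subset[of "g ` P" C]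
    by simp
qed

section \<open>Splitting along disjoint families\<close>

definition splits_into :: "real \<Rightarrow> 'a::metric_space set \<Rightarrow> 'a set set \<Rightarrow> bool" where
  "splits_into R A \<Y> \<longleftrightarrow> (\<exists>\<U>1 \<U>2.
     R_disjoint R \<U>1 \<and> R_disjoint R \<U>2 \<and> \<U>1 \<union> \<U>2 \<subseteq> \<Y> \<and> A = \<Union>(\<U>1 \<union> \<U>2))"

lemma decomposes_iff_splits_into: "decomposes R \<X> \<Y> \<longleftrightarrow> (\<forall>A\<in>\<X>. splits_into R A \<Y>)"
  unfolding decomposes_def splits_into_def ..

lemma R_disjoint_singleton: "R_disjoint R ({A} - {{}})"
  unfolding R_disjoint_def by auto

lemma splits_into_self: "A \<in> \<Y> \<Longrightarrow> splits_into R A \<Y>"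
  unfolding splits_into_def using R_disjoint_singleton[of R A]
  by (intro exI[of _ "{A} - {{}}"]) blast

lemma splits_into_mono: "splits_into R A \<Y> \<Longrightarrow> \<Y> \<subseteq> \<Y>' \<Longrightarrow> splits_into R A \<Y>'"
  unfolding splits_into_def by blast

lemma R_disjoint_Int:
  assumes "R_disjoint R \<P>"
  shows "R_disjoint R ((\<lambda>P. A \<inter> P) ` \<P> - {{}})"
  unfolding R_disjoint_def
proof (intro conjI ballI impI)
  fix E E' assume E: "E \<in> (\<lambda>P. A \<inter> P) ` \<P> - {{}}" and E': "E' \<in> (\<lambda>P. A \<inter> P) ` \<P> - {{}}"
    and "E \<noteq> E'"
  then obtain P P' where P: "P \<in> \<P>" "E = A \<inter> P" "E \<noteq> {}" and P': "P' \<in> \<P>" "E' = A \<inter> P'" "E' \<noteq> {}"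
    and "P \<noteq> P'"
    by blast
  then have "R < setdist P P'"
    using assms unfolding R_disjoint_def by blast
  also have "\<dots> \<le> setdist P E'"
    using P' by (intro setdist_subset_right) auto
  also have "\<dots> \<le> setdist E E'"
    using P by (intro setdist_subset_left) auto
  finally show "R < setdist E E'" .
qed auto

lemma splits_into_along_R_disjoint:
  assumes "R_disjoint R \<P>"
  shows "splits_into R A ({E. \<exists>P\<in>\<P>. E \<subseteq> P} \<union> Pow (A - \<Union>\<P>))"
  unfolding splits_into_def
proof (intro exI conjI)
  show "R_disjoint R ((\<lambda>P. A \<inter> P) ` \<P> - {{}})"
    using assms by (rule R_disjoint_Int)
  show "R_disjoint R ({A - \<Union>\<P>} - {{}})"
    by (rule R_disjoint_singleton)
  show "((\<lambda>P. A \<inter> P) ` \<P> - {{}}) \<union> ({A - \<Union>\<P>} - {{}}) \<subseteq> {E. \<exists>P\<in>\<P>. E \<subseteq> P} \<union> Pow (A - \<Union>\<P>)"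
    by auto
  show "A = \<Union>(((\<lambda>P. A \<inter> P) ` \<P> - {{}}) \<union> ({A - \<Union>\<P>} - {{}}))"
  proof
    show "A \<subseteq> \<Union>(((\<lambda>P. A \<inter> P) ` \<P> - {{}}) \<union> ({A - \<Union>\<P>} - {{}}))"
    proof
      fix a assume "a \<in> A"
      show "a \<in> \<Union>(((\<lambda>P. A \<inter> P) ` \<P> - {{}}) \<union> ({A - \<Union>\<P>} - {{}}))"
      proof (cases "a \<in> \<Union>\<P>")
        case True
        then obtain P where "P \<in> \<P>" "a \<in> P"
          by blast
        then show ?thesis
          using \<open>a \<in> A\<close> by blast
      next
        case False
        then show ?thesis
          using \<open>a \<in> A\<close> by blast
      qed
    qed
  qed auto
qed

lemma R_disjoint_balls:
  assumes "0 < S" and "R < D - 2 * S"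
    and sep: "\<And>p q. p \<in> Q \<Longrightarrow> q \<in> Q \<Longrightarrow> p \<noteq> q \<Longrightarrow> D < dist p q"
  shows "R_disjoint R ((\<lambda>q. ball q S) ` Q)"
  unfolding R_disjoint_def
proof (intro conjI ballI impI)
  fix E assume "E \<in> (\<lambda>q. ball q S) ` Q"
  then show "E \<noteq> {}"
    using \<open>0 < S\<close> by auto
next
  fix E E' assume "E \<in> (\<lambda>q. ball q S) ` Q" "E' \<in> (\<lambda>q. ball q S) ` Q" "E \<noteq> E'"
  then obtain q q' where q: "q \<in> Q" "q' \<in> Q" "q \<noteq> q'" and E: "E = ball q S" "E' = ball q' S"
    by blast
  have "D - 2 * S \<le> setdist E E'"
  proof (rule le_setdistI)
    show "E \<noteq> {}" "E' \<noteq> {}"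
      using E \<open>0 < S\<close> by auto
    fix a b assume "a \<in> E" "b \<in> E'"
    then have "dist q a < S" "dist q' b < S"
      using E by auto
    moreover have "dist q q' \<le> dist q a + dist a b + dist q' b"
      using dist_triangle[of q q' a] dist_triangle[of a q' b] by (simp add: dist_commute)
    ultimately show "D - 2 * S \<le> dist a b"
      using sep[OF q] by linarith
  qed
  then show "R < setdist E E'"
    using \<open>R < D - 2 * S\<close> by linarith
qed

definition remainder :: "'a set \<Rightarrow> (nat \<Rightarrow> 'a set set) \<Rightarrow> nat \<Rightarrow> 'a set" where
  "remainder Y \<W> m = Y - \<Union>(\<Union>i<m. \<W> i)"

lemma remainder_0 [simp]: "remainder Y \<W> 0 = Y"
  unfolding remainder_def by simp

lemma remainder_Suc: "remainder Y \<W> (Suc m) = remainder Y \<W> m - \<Union>(\<W> m)"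
  unfolding remainder_def by (auto simp: lessThan_Suc)

lemma remainder_eq_empty: "Y \<subseteq> \<Union>(\<Union>i<m. \<W> i) \<Longrightarrow> remainder Y \<W> m = {}"
  unfolding remainder_def by blast

lemma splits_into_remainder_Suc:
  assumes "R_disjoint R (\<W> m)" and "A \<subseteq> remainder Y \<W> m"
  shows "splits_into R A ({E. \<exists>P\<in>\<W> m. E \<subseteq> P} \<union> Pow (remainder Y \<W> (Suc m)))"
  by (rule splits_into_mono[OF splits_into_along_R_disjoint[OF assms(1)]])
    (use assms(2) in \<open>auto simp: remainder_Suc\<close>)

section \<open>Separated colourings\<close>

definition colour_separated :: "real \<Rightarrow> real \<Rightarrow> 'a::metric_space \<times> nat \<Rightarrow> 'a \<times> nat \<Rightarrow> bool" where
  "colour_separated S D = (\<lambda>(p, i) (q, j). S \<le> dist p q \<and> (i = j \<longrightarrow> D < dist p q))"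

definition separated_colouring ::
    "'a::metric_space set \<Rightarrow> nat \<Rightarrow> real \<Rightarrow> real \<Rightarrow> ('a \<times> nat) set \<Rightarrow> bool" where
  "separated_colouring U K S D G \<longleftrightarrow> G \<subseteq> U \<times> {..<K} \<and> pairwise (colour_separated S D) G"

lemma separated_colouringD:
  assumes "separated_colouring U K S D G" "(p, i) \<in> G" "(q, j) \<in> G" "(p, i) \<noteq> (q, j)"
  shows "S \<le> dist p q" and "i = j \<Longrightarrow> D < dist p q"
  using assms unfolding separated_colouring_def pairwise_def colour_separated_def by auto

lemma separated_colouring_inj_on_fst:
  assumes "0 < S" "separated_colouring U K S D G"
  shows "inj_on fst G"
proof (rule inj_onI)
  fix g h assume "g \<in> G" "h \<in> G" "fst g = fst h"
  then show "g = h"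
    using separated_colouringD(1)[OF assms(2), of "fst g" "snd g" "fst h" "snd h"] \<open>0 < S\<close>
    by (cases g, cases h) auto
qed

lemma separated_colouring_Union_chain:
  assumes "subset.chain (Collect (separated_colouring U K S D)) \<C>"
  shows "separated_colouring U K S D (\<Union>\<C>)"
proof -
  have G: "separated_colouring U K S D G" if "G \<in> \<C>" for G
    using assms that unfolding subset.chain_def by blast
  have "chain\<^sub>\<subseteq> \<C>"
    using assms unfolding subset.chain_def chain_subset_def by blast
  then have "pairwise (colour_separated S D) (\<Union>\<C>)"
    using G unfolding separated_colouring_def by (blast intro: pairwise_chain_Union)
  moreover have "\<Union>\<C> \<subseteq> U \<times> {..<K}"
    using G unfolding separated_colouring_def by blast
  ultimately show ?thesis
    unfolding separated_colouring_def by blast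
qed

lemma separated_colouring_insert:
  assumes "separated_colouring U K S D G" "u \<in> U" "i < K"
    and "\<And>q j. (q, j) \<in> G \<Longrightarrow> S \<le> dist u q \<and> (j = i \<longrightarrow> D < dist u q)"
  shows "separated_colouring U K S D (insert (u, i) G)"
  using assms unfolding separated_colouring_def colour_separated_def
  by (auto simp: pairwise_insert dist_commute)

lemma card_colours_near_le:
  assumes ls: "ls_doubling X N R U" and "0 < R" "2 * R \<le> S" "D < 4 * S" "U \<subseteq> X" "u \<in> U"
    and G: "separated_colouring U K S D G"
  shows "finite (snd ` {g\<in>G. dist u (fst g) \<le> D}) \<and> card (snd ` {g\<in>G. dist u (fst g) \<le> D}) \<le> N^3"
proof -
  define Near where "Near = {g\<in>G. dist u (fst g) \<le> D}"
  have "0 < S" "R \<le> S / 2" "u \<in> X"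
    using assms by auto
  have inj: "inj_on fst Near"
    using separated_colouring_inj_on_fst[OF \<open>0 < S\<close> G] unfolding Near_def
    by (rule inj_on_subset) blast
  have "fst ` Near \<subseteq> ball u (2^3 * (S / 2)) \<inter> X \<inter> U"
    using G \<open>D < 4 * S\<close> \<open>U \<subseteq> X\<close> unfolding Near_def separated_colouring_def by auto
  moreover have "2 * (S / 2) \<le> dist p q" if "p \<in> fst ` Near" "q \<in> fst ` Near" "p \<noteq> q" for p q
    using that separated_colouringD(1)[OF G] unfolding Near_def by auto
  ultimately have "finite (fst ` Near) \<and> card (fst ` Near) \<le> N^3"
    by (rule ls_doubling_separated_card_le[OF ls \<open>0 < R\<close> \<open>R \<le> S / 2\<close> \<open>u \<in> X\<close>])
  moreover have "finite Near" if "finite (fst ` Near)"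
    using finite_imageD[OF that inj] .
  ultimately have "finite Near" "card Near \<le> N^3"
    using card_image[OF inj] by auto
  then show ?thesis
    using card_image_le[of Near snd] unfolding Near_def by simp
qed

text \<open>A maximal colouring (Zorn) covers \<open>U\<close>: an uncovered point sees at most \<open>N^3\<close> colours
  within distance \<open>D\<close>, so it could be added with a colour that is still free.\<close>
lemma exists_covering_separated_colouring:
  assumes ls: "ls_doubling X N R U" and "0 < R" "2 * R \<le> S" "D < 4 * S" "U \<subseteq> X" "N^3 < K"
  shows "\<exists>G. separated_colouring U K S D G \<and> U \<subseteq> (\<Union>(q, i)\<in>G. ball q S)"
proof -
  have "\<exists>M\<in>Collect (separated_colouring U K S D).
      \<forall>G\<in>Collect (separated_colouring U K S D). M \<subseteq> G \<longrightarrow> G = M"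
    by (rule subset_Zorn') (simp add: separated_colouring_Union_chain)
  then obtain M where M: "separated_colouring U K S D M"
    and max: "\<And>G. separated_colouring U K S D G \<Longrightarrow> M \<subseteq> G \<Longrightarrow> G = M"
    by blast
  have "u \<in> (\<Union>(q, i)\<in>M. ball q S)" if "u \<in> U" for u
  proof (rule ccontr)
    assume uncovered: "u \<notin> (\<Union>(q, i)\<in>M. ball q S)"
    have far: "S \<le> dist u q" if "(q, j) \<in> M" for q j
    proof -
      have "u \<notin> ball q S"
        using that uncovered by blast
      then show ?thesis
        by (simp add: dist_commute)
    qed
    let ?near = "snd ` {g\<in>M. dist u (fst g) \<le> D}"
    have "finite ?near" "card ?near \<le> N^3"
      using card_colours_near_le[OF assms(1-5) \<open>u \<in> U\<close> M] by auto
    have "\<not> {..<K} \<subseteq> ?near"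
    proof
      assume "{..<K} \<subseteq> ?near"
      then have "card {..<K} \<le> card ?near"
        by (rule card_mono[OF \<open>finite ?near\<close>])
      then show False
        using \<open>card ?near \<le> N^3\<close> \<open>N^3 < K\<close> by simp
    qed
    then obtain i where i: "i < K" "i \<notin> ?near"
      by blast
    have "separated_colouring U K S D (insert (u, i) M)"
    proof (rule separated_colouring_insert[OF M \<open>u \<in> U\<close> \<open>i < K\<close>])
      fix q j assume "(q, j) \<in> M"
      moreover have "D < dist u q" if "(q, i) \<in> M"
      proof (rule ccontr)
        assume "\<not> D < dist u q"
        then have "(q, i) \<in> {g\<in>M. dist u (fst g) \<le> D}"
          using that by simp
        then show False
          using i(2) by (metis image_eqI snd_conv)
      qed
      ultimately show "S \<le> dist u q \<and> (j = i \<longrightarrow> D < dist u q)"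
        using far by blast
    qed
    moreover have "(u, i) \<notin> M"
      using far[of u i] \<open>0 < R\<close> \<open>2 * R \<le> S\<close> by auto
    ultimately show False
      using max by blast
  qed
  then show ?thesis
    using M by blast
qed

definition colour_balls :: "real \<Rightarrow> ('a::metric_space \<times> nat) set \<Rightarrow> nat \<Rightarrow> 'a set set" where
  "colour_balls S G j = (\<lambda>q. ball q S) ` {q. (q, j) \<in> G}"

lemma R_disjoint_colour_balls:
  assumes "0 < S" "R < D - 2 * S" "separated_colouring U K S D G"
  shows "R_disjoint R (colour_balls S G j)"
  unfolding colour_balls_def
  using assms(1,2) by (rule R_disjoint_balls) (auto dest: separated_colouringD(2)[OF assms(3)])

lemma remainder_colour_balls_eq_empty:
  assumes "separated_colouring U K S D G" "U \<subseteq> (\<Union>(q, i)\<in>G. ball q S)"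
  shows "remainder U (colour_balls S G) K = {}"
proof (rule remainder_eq_empty, rule subsetI)
  fix u assume "u \<in> U"
  then obtain q i where "(q, i) \<in> G" "u \<in> ball q S"
    using assms(2) by blast
  moreover have "i < K"
    using \<open>(q, i) \<in> G\<close> assms(1) unfolding separated_colouring_def by blast
  ultimately show "u \<in> \<Union>(\<Union>i<K. colour_balls S G i)"
    unfolding colour_balls_def by blast
qed

section \<open>The decomposition sequence\<close>

definition sets_of_diam_le :: "real \<Rightarrow> 'a::metric_space set set" where
  "sets_of_diam_le d = {E. \<forall>a\<in>E. \<forall>b\<in>E. dist a b \<le> d}"

lemma uniformly_bounded_sets_of_diam_le: "\<U> \<subseteq> sets_of_diam_le d \<Longrightarrow> uniformly_bounded \<U>"
  unfolding uniformly_bounded_def sets_of_diam_le_def by blast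

lemma subset_ball_in_sets_of_diam_le:
  assumes "E \<subseteq> ball q r"
  shows "E \<in> sets_of_diam_le (2 * r)"
  unfolding sets_of_diam_le_def
proof (intro CollectI ballI)
  fix a b assume "a \<in> E" "b \<in> E"
  then have "dist q a < r" "dist q b < r"
    using assms by auto
  then show "dist a b \<le> 2 * r"
    using dist_triangle3[of a b q] by linarith
qed

locale weak_C_cover =
  fixes X :: "'a::metric_space set" and Rs :: "nat \<Rightarrow> real" and n :: nat
    and W :: "nat \<Rightarrow> 'a set set" and N :: nat and R0 :: real
  assumes Rs_pos: "\<And>i. 0 < Rs i" and Rs_mono: "mono Rs"
    and W_R_disjoint: "\<And>i. i \<le> n \<Longrightarrow> R_disjoint (Rs i) (W i)"
    and W_subset: "\<And>i U. i \<le> n \<Longrightarrow> U \<in> W i \<Longrightarrow> U \<subseteq> X"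
    and W_cover: "\<Union>(\<Union>i\<le>n. W i) = X"
    and R0_pos: "0 < R0"
    and W_doubling: "\<And>i U. i \<le> n \<Longrightarrow> U \<in> W i \<Longrightarrow> ls_doubling X N R0 U"
begin

text \<open>\<open>2 R0 \<le> S\<close> makes the doubling property available at scale \<open>S / 2\<close>, \<open>D < 4 S\<close> bounds
  the number of colours near a point by \<open>N^3\<close>, and \<open>Rs i < D - 2 S\<close> for \<open>i \<le> n + K\<close> makes
  the colour classes disjoint enough for the last \<open>K\<close> steps.\<close>
definition K :: nat where
  "K = Suc (N^3)"

definition S :: real where
  "S = 2 * R0 + Rs (n + K) + 1"

definition D :: real where
  "D = 2 * S + Rs (n + K) + 1"

lemma S_pos: "0 < S"
  and R0_le_S: "2 * R0 \<le> S"
  and D_less: "D < 4 * S"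
  and Rs_less_D: "i \<le> n + K \<Longrightarrow> Rs i < D - 2 * S"
proof -
  have "0 < Rs (n + K)"
    by (rule Rs_pos)
  then show "0 < S" "2 * R0 \<le> S" "D < 4 * S"
    using R0_pos unfolding S_def D_def by (simp_all add: algebra_simps)
  show "Rs i < D - 2 * S" if "i \<le> n + K"
    using monoD[OF Rs_mono that] unfolding D_def by linarith
qed

definition colouring :: "'a set \<Rightarrow> ('a \<times> nat) set" where
  "colouring U = (SOME G. separated_colouring U K S D G \<and> U \<subseteq> (\<Union>(q, i)\<in>G. ball q S))"

lemma colouring:
  assumes "i \<le> n" "U \<in> W i"
  shows "separated_colouring U K S D (colouring U) \<and> U \<subseteq> (\<Union>(q, j)\<in>colouring U. ball q S)"
  unfolding colouring_def
proof (rule someI_ex, rule exists_covering_separated_colouring)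
  show "ls_doubling X N R0 U" "U \<subseteq> X"
    using W_doubling W_subset assms by auto
qed (use R0_pos R0_le_S D_less in \<open>auto simp: K_def\<close>)

definition uncoloured :: "'a set \<Rightarrow> nat \<Rightarrow> 'a set" where
  "uncoloured U j = remainder U (colour_balls S (colouring U)) j"

text \<open>Stages \<open>0, \<dots>, n\<close> cut away the families \<open>W 0, \<dots>, W n\<close>, stages \<open>n + 1, \<dots>, n + K\<close> the
  balls of the colours \<open>0, \<dots>, K - 1\<close>; for \<open>k \<le> n\<close> the truncated difference \<open>k - n\<close> is \<open>0\<close>, so
  \<open>uncoloured U (k - n) = U\<close>.\<close>
definition stage :: "nat \<Rightarrow> 'a set set" where
  "stage k = {A. \<exists>i\<le>n. \<exists>U\<in>W i. A \<subseteq> uncoloured U (k - n)} \<union> sets_of_diam_le (2 * S)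
     \<union> Pow (remainder X W (Suc k))"

lemma remainder_X_eq_empty:
  assumes "n < m"
  shows "remainder X W m = {}"
proof (rule remainder_eq_empty)
  have "{..n} \<subseteq> {..<m}"
    using assms by auto
  then show "X \<subseteq> \<Union>(\<Union>i<m. W i)"
    using W_cover by blast
qed

lemma splits_into_stage_uncovered:
  assumes "m \<le> n" "A \<subseteq> remainder X W m"
  shows "splits_into (Rs m) A (stage m)"
proof (rule splits_into_mono[OF splits_into_remainder_Suc[OF W_R_disjoint[OF \<open>m \<le> n\<close>] assms(2)]])
  have "E \<in> stage m" if "P \<in> W m" "E \<subseteq> P" for E P
  proof -
    have "E \<subseteq> uncoloured P (m - n)"
      using that \<open>m \<le> n\<close> unfolding uncoloured_def by simp
    then show ?thesis
      using that(1) \<open>m \<le> n\<close> unfolding stage_def by blast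
  qed
  moreover have "Pow (remainder X W (Suc m)) \<subseteq> stage m"
    unfolding stage_def by blast
  ultimately show "{E. \<exists>P\<in>W m. E \<subseteq> P} \<union> Pow (remainder X W (Suc m)) \<subseteq> stage m"
    by blast
qed

lemma splits_into_stage_uncoloured:
  assumes "n \<le> i" "i < n + K" "j \<le> n" "U \<in> W j" "A \<subseteq> uncoloured U (i - n)"
  shows "splits_into (Rs (Suc i)) A (stage (Suc i))"
proof (rule splits_into_mono)
  have "Rs (Suc i) < D - 2 * S"
    using Rs_less_D \<open>i < n + K\<close> by simp
  then have "R_disjoint (Rs (Suc i)) (colour_balls S (colouring U) (i - n))"
    by (rule R_disjoint_colour_balls[OF S_pos _ conjunct1[OF colouring[OF assms(3,4)]]])
  then show "splits_into (Rs (Suc i)) A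
      ({E. \<exists>P\<in>colour_balls S (colouring U) (i - n). E \<subseteq> P} \<union> Pow (uncoloured U (Suc (i - n))))"
    using assms(5) unfolding uncoloured_def by (rule splits_into_remainder_Suc)
  show "{E. \<exists>P\<in>colour_balls S (colouring U) (i - n). E \<subseteq> P} \<union> Pow (uncoloured U (Suc (i - n)))
      \<subseteq> stage (Suc i)"
  proof -
    have "E \<in> sets_of_diam_le (2 * S)"
      if P: "P \<in> colour_balls S (colouring U) (i - n)" and "E \<subseteq> P" for E P
    proof -
      obtain q where "P = ball q S"
        using P unfolding colour_balls_def by blast
      then show ?thesis
        using \<open>E \<subseteq> P\<close> by (simp add: subset_ball_in_sets_of_diam_le)
    qed
    moreover have "sets_of_diam_le (2 * S) \<subseteq> stage (Suc i)"
      unfolding stage_def by blast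
    moreover have "Pow (uncoloured U (Suc i - n)) \<subseteq> stage (Suc i)"
      using assms(3,4) unfolding stage_def by blast
    moreover have "Suc (i - n) = Suc i - n"
      using \<open>n \<le> i\<close> by simp
    ultimately show ?thesis
      by auto
  qed
qed

lemma decomposes_stage_0: "decomposes (Rs 0) {X} (stage 0)"
  using splits_into_stage_uncovered[of 0 X] by (simp add: decomposes_iff_splits_into)

lemma decomposes_stage_Suc:
  assumes "i < n + K"
  shows "decomposes (Rs (Suc i)) (stage i) (stage (Suc i))"
  unfolding decomposes_iff_splits_into
proof
  fix A assume "A \<in> stage i"
  then consider (coloured) j U where "j \<le> n" "U \<in> W j" "A \<subseteq> uncoloured U (i - n)"
    | (small) "A \<in> sets_of_diam_le (2 * S)"
    | (uncovered) "A \<subseteq> remainder X W (Suc i)"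
    unfolding stage_def by blast
  then show "splits_into (Rs (Suc i)) A (stage (Suc i))"
  proof cases
    case coloured
    show ?thesis
    proof (cases "n \<le> i")
      case True
      then show ?thesis
        by (rule splits_into_stage_uncoloured[OF _ assms coloured])
    next
      case False
      then have "A \<subseteq> uncoloured U (Suc i - n)"
        using coloured(3) by simp
      then have "A \<in> stage (Suc i)"
        using coloured(1,2) unfolding stage_def by blast
      then show ?thesis
        by (rule splits_into_self)
    qed
  next
    case small
    then have "A \<in> stage (Suc i)"
      unfolding stage_def by blast
    then show ?thesis
      by (rule splits_into_self)
  next
    case uncovered
    show ?thesis
    proof (cases "Suc i \<le> n")
      case True
      then show ?thesis
        by (rule splits_into_stage_uncovered[OF _ uncovered])
    next
      case False
      then have "A = {}"
        using uncovered remainder_X_eq_empty[of "Suc i"] by simp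
      then have "A \<in> stage (Suc i)"
        unfolding stage_def sets_of_diam_le_def by blast
      then show ?thesis
        by (rule splits_into_self)
    qed
  qed
qed

lemma uniformly_bounded_last_stage: "uniformly_bounded (stage (n + K))"
proof (rule uniformly_bounded_sets_of_diam_le, rule subsetI)
  have empty: "{} \<in> sets_of_diam_le (2 * S)"
    unfolding sets_of_diam_le_def by blast
  fix A assume "A \<in> stage (n + K)"
  then consider (coloured) j U where "j \<le> n" "U \<in> W j" "A \<subseteq> uncoloured U K"
    | (small) "A \<in> sets_of_diam_le (2 * S)"
    | (uncovered) "A \<subseteq> remainder X W (Suc (n + K))"
    unfolding stage_def by auto
  then show "A \<in> sets_of_diam_le (2 * S)"
  proof cases
    case coloured
    have "uncoloured U K = {}"
      unfolding uncoloured_def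
      by (rule remainder_colour_balls_eq_empty[OF conjunct1[OF colouring[OF coloured(1,2)]]
            conjunct2[OF colouring[OF coloured(1,2)]]])
    then show ?thesis
      using coloured(3) empty by simp
  next
    case uncovered
    then show ?thesis
      using remainder_X_eq_empty[of "Suc (n + K)"] empty by simp
  qed
qed

end

theorem theorem4p5:
  fixes X :: "'a::metric_space set"
  assumes "weak_hyperbolic_C X"
  shows "sFDC {X}"
  unfolding sFDC_def
proof (intro allI impI)
  fix Rs :: "nat \<Rightarrow> real" assume Rs: "\<forall>i. 0 < Rs i" "mono Rs"
  obtain n W where W: "\<forall>i\<le>n. R_disjoint (Rs i) (W i)" "\<forall>i\<le>n. \<forall>U\<in>W i. U \<subseteq> X"
      "\<Union>(\<Union>i\<le>n. W i) = X" "weakly_uniformly_ls_doubling X (\<Union>i\<le>n. W i)"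
    using assms[unfolded weak_hyperbolic_C_def, THEN spec[of _ Rs], THEN mp, OF Rs(1)]
    by (elim exE conjE) (rule that, assumption+)
  obtain N R0 where "0 < R0" "\<forall>U\<in>(\<Union>i\<le>n. W i). ls_doubling X N R0 U"
    using W(4)[unfolded weakly_uniformly_ls_doubling_def]
    by (elim exE conjE) (rule that, assumption+)
  then interpret weak_C_cover X Rs n W N R0
    using Rs W(1-3) by unfold_locales auto
  show "\<exists>m \<U>. uniformly_bounded (\<U> m) \<and> decomposes (Rs 0) {X} (\<U> 0) \<and>
      (\<forall>i<m. decomposes (Rs (Suc i)) (\<U> i) (\<U> (Suc i)))"
  proof (intro exI conjI allI impI)
    show "uniformly_bounded (stage (n + K))"
      by (rule uniformly_bounded_last_stage)
    show "decomposes (Rs 0) {X} (stage 0)"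
      by (rule decomposes_stage_0)
    show "decomposes (Rs (Suc i)) (stage i) (stage (Suc i))" if "i < n + K" for i
      using that by (rule decomposes_stage_Suc)
  qed
qed

end
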